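(* Under the hypotheses and notation of the setting below (anonymous polymatrix game, arbitrary joint action history $(a_l)_{0\le l\le k}$, beliefs $\hat\pi$ and aggregate beliefs $\hat\mu$ built with the same step sizes), for every $k\ge0$ and agent $i$, the maps $a^i\mapsto\bar R^i(a^i,\hat\mu^i_k)$ and $a^i\mapsto R^i(a^i,\hat\pi^{-i}_k)$ have the same set of maximizers over $\mathbb{A}$. Consequently, any deterministic rule that maps each agent's vector of expected rewards $(\cdot)_{a^i\in\mathbb{A}}$ to an action produces the same joint action $a_{k+1}$ whether applied to $(\bar R^i(\cdot,\hat\mu^i_k))_{i}$ or to $(R^i(\cdot,\hat\pi^{-i}_k))_{i}$.
   Context: Setting: $\mathcal{G}$ is an $N$-player game that is polymatrix ($r^i(a^i,a^{-i})=\sum_{j\neq i}r^{ij}(a^i,a^j)$) and anonymous (common action set $\mathbb{A}$ with $|\mathbb{A}|=n$, rewards invariant under permutations of $a^{-i}$). $\bar r^i:\mathbb{A}\times\mathbb{X}\to\mathbb{R}$ satisfies $r^i(a^i,a^{-i})=\bar r^i(a^i,\sigma(a^{-i}))$, where $\sigma(a^{-i})=\sum_{j\ne i}\mathds{1}\{a^j\}$ and $\mathbb{X}=\{\xi\in\mathbb{N}^n:\sum_l\xi_l=N-1\}$. Given step sizes $(\alpha_k)_{k\ge1}$ and a joint action sequence $(a_l)$: $\hat\pi^j_0=\mathds{1}\{a^j_0\}$, $\hat\pi^j_k=\hat\pi^j_{k-1}+\alpha_k(\mathds{1}\{a^j_k\}-\hat\pi^j_{k-1})$; $\hat\mu^i_0=\mathds{1}\{\sigma(a^{-i}_0)\}$,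 $\hat\mu^i_k=\hat\mu^i_{k-1}+\alpha_k(\mathds{1}\{\sigma(a^{-i}_k)\}-\hat\mu^i_{k-1})$. $R^i(a^i,\pi^{-i})=\sum_{a^{-i}}r^i(a^i,a^{-i})\prod_{j\ne i}\pi^j(a^j)$, $\bar R^i(a^i,\mu)=\sum_{x\in\mathbb{X}}\bar r^i(a^i,x)\mu(x)$. *)

theory Defs
  imports Complex_Main "HOL-Combinatorics.Permutations"
begin

text \<open>Players form a finite type 'p (N = CARD('p)); actions form a finite type 'a
  (the common action set, n = CARD('a)). A joint action is a profile 'p \<Rightarrow> 'a.\<close>

definition indic :: "'x \<Rightarrow> 'x \<Rightarrow> real" where
  "indic x0 = (\<lambda>x. if x = x0 then 1 else 0)"

definition sigma :: "'p::finite \<Rightarrow> ('p \<Rightarrow> 'a) \<Rightarrow> ('a \<Rightarrow> nat)" where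
  "sigma i b = (\<lambda>l. card {j. j \<noteq> i \<and> b j = l})"

definition Xset :: "nat \<Rightarrow> ('a::finite \<Rightarrow> nat) set" where
  "Xset N = {\<xi>. (\<Sum>l\<in>UNIV. \<xi> l) = N - 1}"

definition polymatrix :: "('p::finite \<Rightarrow> ('p \<Rightarrow> 'a) \<Rightarrow> real) \<Rightarrow> bool" where
  "polymatrix r \<longleftrightarrow> (\<exists>rr :: 'p \<Rightarrow> 'p \<Rightarrow> 'a \<Rightarrow> 'a \<Rightarrow> real.
      \<forall>i b. r i b = (\<Sum>j\<in>UNIV - {i}. rr i j (b i) (b j)))"

definition anonymous :: "('p::finite \<Rightarrow> ('p \<Rightarrow> 'a) \<Rightarrow> real) \<Rightarrow> bool" where
  "anonymous r \<longleftrightarrow> (\<forall>i b p. p permutes (UNIV - {i}) \<longrightarrow> r i (b \<circ> p) = r i b)"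

primrec pihat :: "(nat \<Rightarrow> real) \<Rightarrow> (nat \<Rightarrow> 'p \<Rightarrow> 'a) \<Rightarrow> 'p \<Rightarrow> nat \<Rightarrow> 'a \<Rightarrow> real" where
  "pihat \<alpha> a j 0 = indic (a 0 j)"
| "pihat \<alpha> a j (Suc k) = (\<lambda>x. pihat \<alpha> a j k x + \<alpha> (Suc k) * (indic (a (Suc k) j) x - pihat \<alpha> a j k x))"

primrec muhat :: "(nat \<Rightarrow> real) \<Rightarrow> (nat \<Rightarrow> 'p::finite \<Rightarrow> 'a) \<Rightarrow> 'p \<Rightarrow> nat \<Rightarrow> ('a \<Rightarrow> nat) \<Rightarrow> real" where
  "muhat \<alpha> a i 0 = indic (sigma i (a 0))"
| "muhat \<alpha> a i (Suc k) = (\<lambda>x. muhat \<alpha> a i k x + \<alpha> (Suc k) * (indic (sigma i (a (Suc k))) x - muhat \<alpha> a i k x))"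

text \<open>R^i(a^i, pi^{-i}): sum over a^{-i}, encoded as profiles b with b i = a^i.\<close>
definition Rexp :: "('p::finite \<Rightarrow> ('p \<Rightarrow> 'a::finite) \<Rightarrow> real) \<Rightarrow> 'p \<Rightarrow> 'a \<Rightarrow> ('p \<Rightarrow> 'a \<Rightarrow> real) \<Rightarrow> real" where
  "Rexp r i ai \<pi> = (\<Sum>b\<in>{b. b i = ai}. r i b * (\<Prod>j\<in>UNIV - {i}. \<pi> j (b j)))"

definition Rbar :: "('p::finite \<Rightarrow> 'a::finite \<Rightarrow> ('a \<Rightarrow> nat) \<Rightarrow> real) \<Rightarrow> 'p \<Rightarrow> 'a \<Rightarrow> (('a \<Rightarrow> nat) \<Rightarrow> real) \<Rightarrow> real" where
  "Rbar rb i ai \<mu> = (\<Sum>x\<in>Xset (card (UNIV :: 'p set)). rb i ai x * \<mu> x)"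

definition argmaxset :: "('a::finite \<Rightarrow> real) \<Rightarrow> 'a set" where
  "argmaxset f = {x. \<forall>y. f y \<le> f x}"

end

theory Submission
  imports Defs "HOL-Library.FuncSet"
begin

text \<open>Both beliefs are running averages of indicator functions with the same step sizes, and
  both expected rewards are linear in the beliefs. Hence Rbar^i(a^i, muhat^i_k) is the running
  average of the realised rewards r^i(a^i, a^{-i}_l) = sum_{j <> i} r^{ij}(a^i, a^j_l), which is
  sum_{j <> i} sum_c r^{ij}(a^i, c) pihat^j_k(c). The expectation of a polymatrix reward under the
  product belief prod_{j <> i} pihat^j_k only involves the marginals, so R^i(a^i, pihat^{-i}_k) is
  the same double sum. The two reward vectors thus coincide, and with them their maximisers and
  every deterministic choice made from them.\<close>

primrec running_avg :: "(nat \<Rightarrow> real) \<Rightarrow> (nat \<Rightarrow> real) \<Rightarrow> nat \<Rightarrow> real" where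
  "running_avg \<alpha> v 0 = v 0"
| "running_avg \<alpha> v (Suc k) = running_avg \<alpha> v k + \<alpha> (Suc k) * (v (Suc k) - running_avg \<alpha> v k)"

lemma running_avg_const: "running_avg \<alpha> (\<lambda>_. c) k = c"
  by (induction k) simp_all

lemma sum_mult_running_avg:
  "(\<Sum>x\<in>A. f x * running_avg \<alpha> (v x) k) = running_avg \<alpha> (\<lambda>l. \<Sum>x\<in>A. f x * v x l) k"
proof (induction k)
  case (Suc k)
  then show ?case
    by (simp add: algebra_simps sum.distrib sum_subtractf sum_distrib_left flip: Suc.IH)
qed simp

lemma pihat_eq_running_avg: "pihat \<alpha> a j k x = running_avg \<alpha> (\<lambda>l. indic (a l j) x) k"
  by (induction k) simp_all

lemma muhat_eq_running_avg: "muhat \<alpha> a i k x = running_avg \<alpha> (\<lambda>l. indic (sigma i (a l)) x) k"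
  by (induction k) simp_all

lemma sum_mult_indic: "finite A \<Longrightarrow> x0 \<in> A \<Longrightarrow> (\<Sum>x\<in>A. f x * indic x0 x) = f x0"
  by (simp add: indic_def if_distrib sum.delta cong: if_cong)

lemma sum_mult_pihat:
  fixes f :: "'a::finite \<Rightarrow> real"
  shows "(\<Sum>c\<in>UNIV. f c * pihat \<alpha> a j k c) = running_avg \<alpha> (\<lambda>l. f (a l j)) k"
  by (simp add: pihat_eq_running_avg sum_mult_running_avg sum_mult_indic)

lemma sum_pihat_eq_1: "(\<Sum>c\<in>(UNIV :: 'a::finite set). pihat \<alpha> a j k c) = 1"
  using sum_mult_pihat[where f = "\<lambda>_. 1"] by (simp add: running_avg_const)

lemma finite_Xset: "finite (Xset N :: ('a::finite \<Rightarrow> nat) set)"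
proof -
  have "\<xi> l \<le> N" if "\<xi> \<in> Xset N" for \<xi> :: "'a \<Rightarrow> nat" and l
    using that member_le_sum[of l UNIV \<xi>] by (simp add: Xset_def)
  then have "Xset N \<subseteq> (PiE UNIV (\<lambda>_. {..N}) :: ('a \<Rightarrow> nat) set)"
    by (auto simp: PiE_UNIV_domain)
  then show ?thesis
    by (rule finite_subset) (simp add: finite_PiE)
qed

lemma sigma_in_Xset:
  fixes i :: "'p::finite"
  shows "sigma i b \<in> Xset (card (UNIV :: 'p set))"
proof -
  have "(\<Sum>l\<in>UNIV. card {j. j \<noteq> i \<and> b j = l}) = card (\<Union>l\<in>UNIV. {j. j \<noteq> i \<and> b j = l})"
    by (rule card_UN_disjoint[symmetric]) auto
  also have "(\<Union>l\<in>UNIV. {j. j \<noteq> i \<and> b j = l}) = UNIV - {i}"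
    by auto
  also have "card (UNIV - {i}) = card (UNIV :: 'p set) - 1"
    by (simp add: card_Diff_singleton)
  finally show ?thesis
    by (simp add: Xset_def sigma_def)
qed

lemma sigma_fun_upd_self: "sigma i (b(i := x)) = sigma i b"
  unfolding sigma_def by (rule ext, rule arg_cong[where f = card]) auto

lemma Rbar_muhat: "Rbar rb i ai (muhat \<alpha> a i k) = running_avg \<alpha> (\<lambda>l. rb i ai (sigma i (a l))) k"
  by (simp add: Rbar_def muhat_eq_running_avg sum_mult_running_avg sum_mult_indic
      finite_Xset sigma_in_Xset)

lemma sum_PiE_mult_prod_marginal:
  fixes \<pi> :: "'i \<Rightarrow> 'c \<Rightarrow> 'r::comm_semiring_1"
  assumes "finite T" "j \<in> T" "\<And>j'. j' \<in> T \<Longrightarrow> finite (A j')"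
    and mass: "\<And>j'. j' \<in> T - {j} \<Longrightarrow> (\<Sum>c\<in>A j'. \<pi> j' c) = 1"
  shows "(\<Sum>g\<in>PiE T A. f (g j) * (\<Prod>j'\<in>T. \<pi> j' (g j'))) = (\<Sum>c\<in>A j. f c * \<pi> j c)"
proof -
  define \<rho> where "\<rho> j' c = (if j' = j then f c * \<pi> j c else \<pi> j' c)" for j' c
  have "(\<Prod>j'\<in>T. \<rho> j' (g j')) = f (g j) * (\<Prod>j'\<in>T. \<pi> j' (g j'))" for g
  proof -
    have "(\<Prod>j'\<in>T - {j}. \<rho> j' (g j')) = (\<Prod>j'\<in>T - {j}. \<pi> j' (g j'))"
      by (rule prod.cong) (simp_all add: \<rho>_def)
    then show ?thesis
      using \<open>finite T\<close> \<open>j \<in> T\<close> by (simp add: prod.remove \<rho>_def mult.assoc)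
  qed
  then have "(\<Sum>g\<in>PiE T A. f (g j) * (\<Prod>j'\<in>T. \<pi> j' (g j'))) = (\<Sum>g\<in>PiE T A. \<Prod>j'\<in>T. \<rho> j' (g j'))"
    by simp
  also have "\<dots> = (\<Prod>j'\<in>T. \<Sum>c\<in>A j'. \<rho> j' c)"
    using assms(1,3) by (rule prod_sum_PiE[symmetric])
  also have "\<dots> = (\<Sum>c\<in>A j. \<rho> j c) * (\<Prod>j'\<in>T - {j}. \<Sum>c\<in>A j'. \<rho> j' c)"
    using \<open>finite T\<close> \<open>j \<in> T\<close> by (simp add: prod.remove)
  also have "\<dots> = (\<Sum>c\<in>A j. f c * \<pi> j c)"
    using mass by (simp add: \<rho>_def)
  finally show ?thesis .
qed

lemma sum_PiE_separable_mult_prod: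
  fixes \<pi> :: "'i \<Rightarrow> 'c \<Rightarrow> 'r::comm_semiring_1"
  assumes "finite T" "\<And>j. j \<in> T \<Longrightarrow> finite (A j)" "\<And>j. j \<in> T \<Longrightarrow> (\<Sum>c\<in>A j. \<pi> j c) = 1"
  shows "(\<Sum>g\<in>PiE T A. (\<Sum>j\<in>T. f j (g j)) * (\<Prod>j'\<in>T. \<pi> j' (g j')))
       = (\<Sum>j\<in>T. \<Sum>c\<in>A j. f j c * \<pi> j c)"
proof -
  have "(\<Sum>g\<in>PiE T A. (\<Sum>j\<in>T. f j (g j)) * (\<Prod>j'\<in>T. \<pi> j' (g j')))
      = (\<Sum>j\<in>T. \<Sum>g\<in>PiE T A. f j (g j) * (\<Prod>j'\<in>T. \<pi> j' (g j')))"
    unfolding sum_distrib_right by (rule sum.swap)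
  also have "\<dots> = (\<Sum>j\<in>T. \<Sum>c\<in>A j. f j c * \<pi> j c)"
    using assms by (intro sum.cong refl sum_PiE_mult_prod_marginal) auto
  finally show ?thesis .
qed

lemma Rexp_eq_sum_PiE:
  "Rexp r i ai \<pi> = (\<Sum>g\<in>PiE (UNIV - {i}) (\<lambda>_. UNIV). r i (g(i := ai)) * (\<Prod>j\<in>UNIV - {i}. \<pi> j (g j)))"
proof -
  have bij: "bij_betw (\<lambda>g. g(i := ai)) (PiE (UNIV - {i}) (\<lambda>_. UNIV)) {b. b i = ai}"
    by (rule bij_betw_byWitness[where f' = "\<lambda>b. restrict b (UNIV - {i})"])
      (auto simp: PiE_def extensional_def)
  have "(\<Prod>j\<in>UNIV - {i}. \<pi> j ((g(i := ai)) j)) = (\<Prod>j\<in>UNIV - {i}. \<pi> j (g j))" for g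
    by (rule prod.cong) auto
  then show ?thesis
    unfolding Rexp_def sum.reindex_bij_betw[OF bij, symmetric] by simp
qed

lemma Rexp_separable:
  fixes \<pi> :: "'p::finite \<Rightarrow> 'a::finite \<Rightarrow> real"
  assumes r: "\<And>b. b i = ai \<Longrightarrow> r i b = (\<Sum>j\<in>UNIV - {i}. rr j (b j))"
    and mass: "\<And>j. (\<Sum>c\<in>UNIV. \<pi> j c) = 1"
  shows "Rexp r i ai \<pi> = (\<Sum>j\<in>UNIV - {i}. \<Sum>c\<in>UNIV. rr j c * \<pi> j c)"
proof -
  have "r i (g(i := ai)) = (\<Sum>j\<in>UNIV - {i}. rr j (g j))" for g
    by (subst r) (auto intro: sum.cong)
  then show ?thesis
    by (simp add: Rexp_eq_sum_PiE sum_PiE_separable_mult_prod mass)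
qed

lemma Rbar_muhat_separable:
  assumes rb: "\<And>b. rb i ai (sigma i b) = (\<Sum>j\<in>UNIV - {i}. rr j (b j))"
  shows "Rbar rb i ai (muhat \<alpha> a i k) = (\<Sum>j\<in>UNIV - {i}. \<Sum>c\<in>UNIV. rr j c * pihat \<alpha> a j k c)"
proof -
  have "Rbar rb i ai (muhat \<alpha> a i k) = running_avg \<alpha> (\<lambda>l. \<Sum>j\<in>UNIV - {i}. rr j (a l j)) k"
    by (simp add: Rbar_muhat rb)
  also have "\<dots> = (\<Sum>j\<in>UNIV - {i}. running_avg \<alpha> (\<lambda>l. rr j (a l j)) k)"
    by (rule sum_mult_running_avg[where f = "\<lambda>_. 1", simplified, symmetric])
  finally show ?thesis
    by (simp add: sum_mult_pihat)
qed

lemma Rbar_muhat_eq_Rexp_pihat: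
  assumes "polymatrix r" and rbar: "\<forall>i b. r i b = rb i (b i) (sigma i b)"
  shows "Rbar rb i ai (muhat \<alpha> a i k) = Rexp r i ai (\<lambda>j. pihat \<alpha> a j k)"
proof -
  obtain rr where rr: "\<And>i b. r i b = (\<Sum>j\<in>UNIV - {i}. rr i j (b i) (b j))"
    using \<open>polymatrix r\<close> unfolding polymatrix_def by blast
  have "rb i ai (sigma i b) = (\<Sum>j\<in>UNIV - {i}. rr i j ai (b j))" for b
  proof -
    have "rb i ai (sigma i b) = r i (b(i := ai))"
      using rbar by (simp add: sigma_fun_upd_self)
    also have "\<dots> = (\<Sum>j\<in>UNIV - {i}. rr i j ai (b j))"
      unfolding rr by (rule sum.cong) auto
    finally show ?thesis .
  qed
  then have "Rbar rb i ai (muhat \<alpha> a i k)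
      = (\<Sum>j\<in>UNIV - {i}. \<Sum>c\<in>UNIV. rr i j ai c * pihat \<alpha> a j k c)"
    by (rule Rbar_muhat_separable)
  also have "\<dots> = Rexp r i ai (\<lambda>j. pihat \<alpha> a j k)"
    by (rule Rexp_separable[symmetric]) (simp_all add: rr sum_pihat_eq_1)
  finally show ?thesis .
qed

theorem corollary1:
  fixes r :: "'p::finite \<Rightarrow> ('p \<Rightarrow> 'a::finite) \<Rightarrow> real"
    and rb :: "'p \<Rightarrow> 'a \<Rightarrow> ('a \<Rightarrow> nat) \<Rightarrow> real"
    and \<alpha> :: "nat \<Rightarrow> real"
    and a :: "nat \<Rightarrow> 'p \<Rightarrow> 'a"
  assumes poly: "polymatrix r"
    and anon: "anonymous r"
    and rbar: "\<forall>i b. r i b = rb i (b i) (sigma i b)"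
  shows "\<forall>k i. argmaxset (\<lambda>ai. Rbar rb i ai (muhat \<alpha> a i k))
              = argmaxset (\<lambda>ai. Rexp r i ai (\<lambda>j. pihat \<alpha> a j k)) \<and>
         (\<forall>D :: 'p \<Rightarrow> ('a \<Rightarrow> real) \<Rightarrow> 'a.
            (\<lambda>i. D i (\<lambda>ai. Rbar rb i ai (muhat \<alpha> a i k)))
          = (\<lambda>i. D i (\<lambda>ai. Rexp r i ai (\<lambda>j. pihat \<alpha> a j k))))"
  using Rbar_muhat_eq_Rexp_pihat[OF poly rbar] by simp

end
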